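(* Let $(\bm\gamma,\Pi)\in\mathfrak{C}$, $N_0>0$, let $\xi$ be a Poisson point process on $[0,\infty)\times\mathcal{Z}\times[0,1]^{\mathbb{N}}$ with intensity $\mathrm{d}t\otimes\Pi(\mathrm{d}\bm z)\otimes\mathrm{d}\mathsf{u}$ (with $\mathrm{d}\mathsf{u}$ the product uniform measure) and points $(t_i,\bm z^i,\mathsf{u}^i)$, and let $N$ be the unique strong solution of $N_t=N_0+\int_0^t(\gamma_b-\gamma_dN_s)\,\mathrm{d}s+\int_{[0,t]\times\mathcal{Z}\times[0,1]^{\mathbb{N}}}(z_b-z_dN_{s-})\,\xi(\mathrm{d}s,\mathrm{d}\bm z,\mathrm{d}\mathsf{u})$. Set $\overline{\bm z}_i:=\frac{z_b^i}{(1-z_d^i)N_{t_i-}+z_b^i}$. Then for every $t\ge0$, the sum $\sum_{i:t_i\le t}\overline{\bm z}_i$ is almost surely finite.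
   Context: Event space $\mathcal{Z}:=\big([0,1]\times[0,\infty)\big)\setminus\{(0,0),(1,0)\}$, elements $\bm z=(z_d,z_b)$. Characteristics $\mathfrak{C}$: pairs $(\bm\gamma,\Pi)$ with $\bm\gamma=(\gamma_d,\gamma_b)\in[0,\infty)^2$, $\Pi$ a $\sigma$-finite measure on $\mathcal{Z}$ with $\int z_d\,\mathrm{d}\Pi<\infty$, $\int z_b\,\mathrm{d}\Pi<\infty$, $\gamma_d+\int z_d\,\mathrm{d}\Pi=\gamma_b+\int z_b\,\mathrm{d}\Pi$. *)

theory Defs
  imports "HOL-Probability.Probability"
begin

text \<open>The event space Z = ([0,1] x [0,oo)) minus {(0,0),(1,0)}; an element is (z_d, z_b).\<close>
definition Zset :: "(real \<times> real) set" where
  "Zset = ({0..1} \<times> {0..}) - {(0,0),(1,0)}"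

text \<open>Characteristics (gamma, Pi): gamma = (gamma_d, gamma_b), Pi a sigma-finite measure on the
  Borel sets of Z with finite first moments and the balance condition.\<close>
definition characteristic :: "real \<times> real \<Rightarrow> (real \<times> real) measure \<Rightarrow> bool" where
  "characteristic \<gamma> Pm \<longleftrightarrow>
     fst \<gamma> \<ge> 0 \<and> snd \<gamma> \<ge> 0 \<and>
     sets Pm = sets (restrict_space borel Zset) \<and>
     sigma_finite_measure Pm \<and>
     integrable Pm fst \<and> integrable Pm snd \<and>
     fst \<gamma> + (\<integral>z. fst z \<partial>Pm) = snd \<gamma> + (\<integral>z. snd z \<partial>Pm)"

text \<open>A Poisson point process on the measure space mu, defined on the probability space M,
  represented by its (random) set of points xi(omega).\<close>
definition poisson_point_process :: "'w measure \<Rightarrow> 'a measure \<Rightarrow> ('w \<Rightarrow> 'a set) \<Rightarrow> bool" where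
  "poisson_point_process M \<mu> \<xi> \<longleftrightarrow>
     prob_space M \<and>
     (\<forall>\<omega>\<in>space M. \<xi> \<omega> \<subseteq> space \<mu>) \<and>
     (\<forall>A\<in>sets \<mu>. emeasure \<mu> A < \<infinity> \<longrightarrow>
        (AE \<omega> in M. finite (\<xi> \<omega> \<inter> A)) \<and>
        (\<lambda>\<omega>. card (\<xi> \<omega> \<inter> A)) \<in> measurable M (count_space UNIV) \<and>
        (\<forall>k::nat. measure M {\<omega>\<in>space M. card (\<xi> \<omega> \<inter> A) = k}
                   = measure \<mu> A ^ k / fact k * exp (- measure \<mu> A))) \<and>
     (\<forall>(n::nat) A. (\<forall>i<n. A i \<in> sets \<mu> \<and> emeasure \<mu> (A i) < \<infinity>) \<and> disjoint_family_on A {..<n}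
        \<longrightarrow> prob_space.indep_vars M (\<lambda>_. count_space UNIV) (\<lambda>i \<omega>. card (\<xi> \<omega> \<inter> A i)) {..<n})"

definition left_lim :: "(real \<Rightarrow> real) \<Rightarrow> real \<Rightarrow> real" where
  "left_lim f t = (if t \<le> 0 then f 0 else Lim (at_left t) f)"

definition cadlag_on_nonneg :: "(real \<Rightarrow> real) \<Rightarrow> bool" where
  "cadlag_on_nonneg f \<longleftrightarrow>
     (\<forall>t\<ge>0. continuous (at_right t) f) \<and> (\<forall>t>0. \<exists>l. (f \<longlongrightarrow> l) (at_left t))"

text \<open>Points of xi: (t, z, u) with t in [0,oo), z = (z_d, z_b) in Z, u in [0,1]^N.\<close>
type_synonym point = "real \<times> (real \<times> real) \<times> (nat \<Rightarrow> real)"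

definition intensity :: "(real \<times> real) measure \<Rightarrow> point measure" where
  "intensity Pm = restrict_space lborel {0..} \<Otimes>\<^sub>M Pm \<Otimes>\<^sub>M
                   (\<Pi>\<^sub>M i\<in>(UNIV::nat set). uniform_measure lborel {0..1::real})"

definition solves_sde :: "real \<times> real \<Rightarrow> real \<Rightarrow> point set \<Rightarrow> (real \<Rightarrow> real) \<Rightarrow> bool" where
  "solves_sde \<gamma> N0 P n \<longleftrightarrow>
     cadlag_on_nonneg n \<and>
     (\<forall>t\<ge>0.
        set_integrable lborel {0..t} (\<lambda>s. snd \<gamma> - fst \<gamma> * n s) \<and>
        (\<lambda>p. snd (fst (snd p)) - fst (fst (snd p)) * left_lim n (fst p))
           summable_on {p\<in>P. fst p \<le> t} \<and>
        n t = N0 + (\<integral>s\<in>{0..t}. (snd \<gamma> - fst \<gamma> * n s) \<partial>lborel)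
              + (\<Sum>\<^sub>\<infinity>p\<in>{p\<in>P. fst p \<le> t}.
                    snd (fst (snd p)) - fst (fst (snd p)) * left_lim n (fst p)))"

definition zbar :: "(real \<Rightarrow> real) \<Rightarrow> point \<Rightarrow> real" where
  "zbar n p = snd (fst (snd p)) /
      ((1 - fst (fst (snd p))) * left_lim n (fst p) + snd (fst (snd p)))"

end

theory Submission
  imports Defs
begin

(* The argument is pathwise once two almost sure properties of the point process are known:
   the sum of the z_d over the points up to time t is finite (its expectation is at most
   2 t times the integral of z_d against Pi, by splitting z_d into dyadic shells), and no two
   points with z_d > 0 occur at the same time (two such points would share a slice of every
   partition of [0,t] into m + 1 intervals, an event of probability O(1/m)).
   Along such a path, N and its left limits stay positive on [0,t]: at the supremum tau of the
   times up to which they are positive, N(tau-) > 0 because just before tau the path can lose at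
   most a quarter of its size, and the single jump at tau leaves (1 - z_d) N(tau-) + z_b > 0.
   By compactness N(s-) >= c > 0 on [0,t], whence zbar <= 2 z_d + 2 z_b / c, and the sum of the
   z_b is finite since z_b = (z_b - z_d N(s-)) + z_d N(s-) with both parts summable. *)

section \<open>Cadlag paths\<close>

lemma compact_locally_bdd_above:
  fixes f :: "'a::metric_space \<Rightarrow> 'b::linorder"
  assumes "compact S" and "\<And>x. x \<in> S \<Longrightarrow> \<exists>e>0. \<exists>B. \<forall>y\<in>S. dist y x < e \<longrightarrow> f y \<le> B"
  shows "\<exists>B. \<forall>y\<in>S. f y \<le> B"
proof -
  from assms(2) obtain e B where eB: "\<And>x. x \<in> S \<Longrightarrow> e x > 0 \<and> (\<forall>y\<in>S. dist y x < e x \<longrightarrow> f y \<le> B x)"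
    by metis
  have "S \<subseteq> (\<Union>x\<in>S. ball x (e x))"
    using eB by force
  then obtain C where C: "C \<subseteq> S" "finite C" "S \<subseteq> (\<Union>x\<in>C. ball x (e x))"
    using compactE_image[OF assms(1), of S "\<lambda>x. ball x (e x)"] by auto
  show ?thesis
  proof (intro exI ballI)
    fix y assume y: "y \<in> S"
    then obtain x where x: "x \<in> C" "dist x y < e x" using C by auto
    then have "f y \<le> B x" using eB C y by (auto simp: dist_commute)
    also have "B x \<le> Max (B ` C)" using x C by auto
    finally show "f y \<le> Max (B ` C)" .
  qed
qed

lemma tendsto_left_lim:
  assumes "cadlag_on_nonneg n" "y > 0"
  shows "(n \<longlongrightarrow> left_lim n y) (at_left y)"
proof -
  obtain l where l: "(n \<longlongrightarrow> l) (at_left y)" using assms unfolding cadlag_on_nonneg_def by blast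
  then have "left_lim n y = l" using assms(2) unfolding left_lim_def by (simp add: tendsto_Lim)
  then show ?thesis using l by simp
qed

lemma left_lim_ge:
  assumes "cadlag_on_nonneg n" "y > 0" "a < y" "\<And>z. a < z \<Longrightarrow> z < y \<Longrightarrow> c \<le> n z"
  shows "c \<le> left_lim n y"
proof (rule tendsto_lowerbound[OF tendsto_left_lim[OF assms(1,2)]])
  show "\<forall>\<^sub>F z in at_left y. c \<le> n z"
    using eventually_at_left_real[OF assms(3)] by eventually_elim (use assms(4) in auto)
qed simp

lemma left_lim_le:
  assumes "cadlag_on_nonneg n" "y > 0" "a < y" "\<And>z. a < z \<Longrightarrow> z < y \<Longrightarrow> n z \<le> c"
  shows "left_lim n y \<le> c"
proof (rule tendsto_upperbound[OF tendsto_left_lim[OF assms(1,2)]])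
  show "\<forall>\<^sub>F z in at_left y. n z \<le> c"
    using eventually_at_left_real[OF assms(3)] by eventually_elim (use assms(4) in auto)
qed simp

lemma cadlag_right_near:
  assumes "cadlag_on_nonneg n" "x \<ge> 0" "e > 0"
  obtains d where "d > 0" "\<And>y. x \<le> y \<Longrightarrow> y < x + d \<Longrightarrow> \<bar>n y - n x\<bar> < e"
proof -
  have "(n \<longlongrightarrow> n x) (at_right x)"
    using assms(1,2) unfolding cadlag_on_nonneg_def continuous_within by blast
  then have "\<forall>\<^sub>F y in at_right x. dist (n y) (n x) < e"
    using assms(3) tendstoD by blast
  then obtain b where b: "b > x" "\<And>y. x < y \<Longrightarrow> y < b \<Longrightarrow> dist (n y) (n x) < e"
    unfolding eventually_at_right_field by blast
  show ?thesis
  proof (rule that[of "b - x"])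
    fix y assume "x \<le> y" "y < x + (b - x)"
    then show "\<bar>n y - n x\<bar> < e" using b assms(3)
      by (cases "y = x") (auto simp: dist_real_def)
  qed (use b in auto)
qed

lemma cadlag_left_near:
  assumes "cadlag_on_nonneg n" "x > 0" "e > 0"
  obtains d where "d > 0" "\<And>y. x - d < y \<Longrightarrow> y < x \<Longrightarrow> \<bar>n y - left_lim n x\<bar> < e"
proof -
  have "\<forall>\<^sub>F y in at_left x. dist (n y) (left_lim n x) < e"
    using tendsto_left_lim[OF assms(1,2)] assms(3) tendstoD by blast
  then obtain b where b: "b < x" "\<And>y. b < y \<Longrightarrow> y < x \<Longrightarrow> dist (n y) (left_lim n x) < e"
    unfolding eventually_at_left_field by blast
  show ?thesis
    by (rule that[of "x - b"]) (use b in \<open>auto simp: dist_real_def\<close>)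
qed

lemma cadlag_locally_between:
  assumes "cadlag_on_nonneg n" "x \<ge> 0" "e > 0"
  defines "I \<equiv> {min (n x) (left_lim n x) - e .. max (n x) (left_lim n x) + e}"
  obtains d where "d > 0" "\<And>y. 0 \<le> y \<Longrightarrow> \<bar>y - x\<bar> < d \<Longrightarrow> n y \<in> I \<and> left_lim n y \<in> I"
proof -
  obtain d1 where d1: "d1 > 0" "\<And>y. x \<le> y \<Longrightarrow> y < x + d1 \<Longrightarrow> \<bar>n y - n x\<bar> < e"
    using cadlag_right_near[OF assms(1-3)] by blast
  obtain d2 where d2: "d2 > 0" "\<And>y. 0 < x \<Longrightarrow> x - d2 < y \<Longrightarrow> y < x \<Longrightarrow> \<bar>n y - left_lim n x\<bar> < e"
  proof (cases "x > 0")
    case True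
    then show ?thesis using cadlag_left_near[OF assms(1) True assms(3)] that by metis
  qed (use that[of 1] in auto)
  define d where "d = min d1 d2"
  have path: "n y \<in> I" if "0 \<le> y" "\<bar>y - x\<bar> < d" for y
  proof (cases "x \<le> y")
    case True
    then show ?thesis using d1(2)[of y] that unfolding I_def d_def by auto
  next
    case False
    then show ?thesis using d2(2)[of y] that unfolding I_def d_def by auto
  qed
  show ?thesis
  proof (rule that)
    show "d > 0" using d1 d2 unfolding d_def by simp
    fix y assume y: "0 \<le> y" "\<bar>y - x\<bar> < d"
    have "left_lim n y \<in> I"
    proof (cases "y = 0")
      case True
      then show ?thesis using path[OF y] by (simp add: left_lim_def)
    next
      case False
      define a where "a = max 0 (x - d)"
      have ay: "0 < y" "a < y" using False y unfolding a_def by auto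
      have "n z \<in> I" if "a < z" "z < y" for z
        using path[of z] that y unfolding a_def by auto
      then show ?thesis unfolding I_def atLeastAtMost_iff
        using left_lim_ge[OF assms(1) ay] left_lim_le[OF assms(1) ay] by (metis (no_types))
    qed
    then show "n y \<in> I \<and> left_lim n y \<in> I" using path[OF y] by blast
  qed
qed

lemma cadlag_pos_near:
  assumes "cadlag_on_nonneg n" "x \<ge> 0" "n x > 0" "left_lim n x > 0"
  obtains d where "d > 0" "\<And>y. 0 \<le> y \<Longrightarrow> \<bar>y - x\<bar> < d \<Longrightarrow> n y > 0 \<and> left_lim n y > 0"
proof -
  define m where "m = min (n x) (left_lim n x)"
  have "m > 0" using assms(3,4) unfolding m_def by simp
  then obtain d where "d > 0" and d: "\<And>y. 0 \<le> y \<Longrightarrow> \<bar>y - x\<bar> < d \<Longrightarrow>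
      n y \<in> {m - m/2 .. max (n x) (left_lim n x) + m/2} \<and>
      left_lim n y \<in> {m - m/2 .. max (n x) (left_lim n x) + m/2}"
    using cadlag_locally_between[OF assms(1,2), of "m/2"] unfolding m_def by auto
  show ?thesis
  proof (rule that[OF \<open>d > 0\<close>])
    fix y assume "0 \<le> y" "\<bar>y - x\<bar> < d"
    then show "n y > 0 \<and> left_lim n y > 0" using d[of y] \<open>m > 0\<close> by auto
  qed
qed

lemma cadlag_bounded:
  assumes "cadlag_on_nonneg n"
  obtains C where "C \<ge> 0" "\<And>y. y \<in> {0..T} \<Longrightarrow> \<bar>n y\<bar> \<le> C \<and> \<bar>left_lim n y\<bar> \<le> C"
proof -
  have "\<exists>B. \<forall>y\<in>{0..T}. max \<bar>n y\<bar> \<bar>left_lim n y\<bar> \<le> B"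
  proof (rule compact_locally_bdd_above)
    fix x :: real assume "x \<in> {0..T}"
    then obtain d where "d > 0" and d: "\<And>y. 0 \<le> y \<Longrightarrow> \<bar>y - x\<bar> < d \<Longrightarrow>
        n y \<in> {min (n x) (left_lim n x) - 1 .. max (n x) (left_lim n x) + 1} \<and>
        left_lim n y \<in> {min (n x) (left_lim n x) - 1 .. max (n x) (left_lim n x) + 1}"
      using cadlag_locally_between[OF assms, of x 1] by auto
    have "\<forall>y\<in>{0..T}. dist y x < d \<longrightarrow> max \<bar>n y\<bar> \<bar>left_lim n y\<bar> \<le> \<bar>n x\<bar> + \<bar>left_lim n x\<bar> + 1"
      using d by (fastforce simp: dist_real_def)
    then show "\<exists>e>0. \<exists>B. \<forall>y\<in>{0..T}. dist y x < e \<longrightarrow> max \<bar>n y\<bar> \<bar>left_lim n y\<bar> \<le> B"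
      using \<open>d > 0\<close> by blast
  qed simp
  then obtain B where "\<forall>y\<in>{0..T}. max \<bar>n y\<bar> \<bar>left_lim n y\<bar> \<le> B" by blast
  then show ?thesis by (intro that[of "max B 0"]) (auto simp: le_max_iff_disj)
qed

lemma cadlag_pos_bounded_below:
  assumes "cadlag_on_nonneg n" "\<And>y. y \<in> {0..T} \<Longrightarrow> n y > 0 \<and> left_lim n y > 0"
  obtains c where "c > 0" "\<And>y. y \<in> {0..T} \<Longrightarrow> c \<le> n y \<and> c \<le> left_lim n y"
proof -
  have "\<exists>B. \<forall>y\<in>{0..T}. 1 / min (n y) (left_lim n y) \<le> B"
  proof (rule compact_locally_bdd_above)
    fix x :: real assume x: "x \<in> {0..T}"
    define m where "m = min (n x) (left_lim n x)"
    have m: "m > 0" using assms(2)[OF x] unfolding m_def by simp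
    obtain d where "d > 0" and d: "\<And>y. 0 \<le> y \<Longrightarrow> \<bar>y - x\<bar> < d \<Longrightarrow>
        n y \<in> {m - m/2 .. max (n x) (left_lim n x) + m/2} \<and>
        left_lim n y \<in> {m - m/2 .. max (n x) (left_lim n x) + m/2}"
      using cadlag_locally_between[OF assms(1), of x "m/2"] x m unfolding m_def by auto
    have "1 / min (n y) (left_lim n y) \<le> 2 / m" if "y \<in> {0..T}" "dist y x < d" for y
    proof -
      have "m / 2 \<le> min (n y) (left_lim n y)" using d[of y] that by (auto simp: dist_real_def)
      then show ?thesis using m by (simp add: divide_simps min_def)
    qed
    then show "\<exists>e>0. \<exists>B. \<forall>y\<in>{0..T}. dist y x < e \<longrightarrow> 1 / min (n y) (left_lim n y) \<le> B"
      using \<open>d > 0\<close> by blast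
  qed simp
  then obtain B where B: "\<And>y. y \<in> {0..T} \<Longrightarrow> 1 / min (n y) (left_lim n y) \<le> B" by blast
  show ?thesis
  proof (rule that[of "1 / max B 1"])
    fix y assume y: "y \<in> {0..T}"
    define m where "m = min (n y) (left_lim n y)"
    have "0 < m" using assms(2)[OF y] unfolding m_def by simp
    moreover have "1 / m \<le> max B 1" using B[OF y] unfolding m_def by simp
    moreover have "0 < max B 1" by simp
    ultimately have "1 / max B 1 \<le> m" by (simp add: field_simps)
    then show "1 / max B 1 \<le> n y \<and> 1 / max B 1 \<le> left_lim n y" unfolding m_def by simp
  qed simp
qed


section \<open>Pathwise analysis of the equation\<close>

lemma set_integral_lborel_singleton:
  fixes a :: real and f :: "real \<Rightarrow> real"
  shows "(\<integral>x\<in>{a..a}. f x \<partial>lborel) = 0"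
proof -
  have "(\<integral>x\<in>{a..a}. f x \<partial>lborel) = (\<integral>x. indicator {a} x *\<^sub>R f x \<partial>lborel)"
    by (simp add: set_lebesgue_integral_def)
  also have "\<dots> = 0"
    by (rule integral_eq_zero_AE) (use AE_lborel_singleton[of a] in \<open>eventually_elim, simp\<close>)
  finally show ?thesis .
qed

lemma infsum_small_outside_finite:
  fixes h :: "'a \<Rightarrow> real"
  assumes "h summable_on A" "\<And>x. x \<in> A \<Longrightarrow> 0 \<le> h x" "\<epsilon> > 0"
  obtains F where "finite F" "F \<subseteq> A" "\<And>B. B \<subseteq> A - F \<Longrightarrow> infsum h B \<le> \<epsilon>"
proof -
  obtain F where F: "finite F" "F \<subseteq> A" "dist (sum h F) (infsum h A) \<le> \<epsilon>"
    using infsum_finite_approximation[OF assms(1,3)] by blast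
  have "infsum h A = infsum h (F \<union> (A - F))" using F by (metis Un_Diff_cancel sup.absorb2)
  also have "\<dots> = infsum h F + infsum h (A - F)"
    by (rule infsum_Un_disjoint) (use F summable_on_subset_banach[OF assms(1)] in auto)
  finally have rest: "infsum h (A - F) \<le> \<epsilon>" using F by (simp add: dist_real_def)
  show ?thesis
  proof (rule that[OF F(1,2)])
    fix B assume B: "B \<subseteq> A - F"
    have "infsum h B \<le> infsum h (A - F)"
      by (rule infsum_mono_neutral) (use B assms(2) summable_on_subset_banach[OF assms(1)] in auto)
    then show "infsum h B \<le> \<epsilon>" using rest by simp
  qed
qed

abbreviation zd :: "point \<Rightarrow> real" where "zd p \<equiv> fst (fst (snd p))"
abbreviation zb :: "point \<Rightarrow> real" where "zb p \<equiv> snd (fst (snd p))"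

locale sde_path =
  fixes gd gb N0 :: real and P :: "point set" and n :: "real \<Rightarrow> real" and T :: real
  assumes gd_nonneg: "gd \<ge> 0" and gb_nonneg: "gb \<ge> 0" and N0_pos: "N0 > 0" and T_nonneg: "T \<ge> 0"
    and cadlag: "cadlag_on_nonneg n"
    and points_in_space: "\<And>p. p \<in> P \<Longrightarrow> fst p \<ge> 0 \<and> fst (snd p) \<in> Zset"
    and drift_integrable: "\<And>s. s \<in> {0..T} \<Longrightarrow> set_integrable lborel {0..s} (\<lambda>x. gb - gd * n x)"
    and jumps_summable: "\<And>s. s \<in> {0..T} \<Longrightarrow>
          (\<lambda>p. zb p - zd p * left_lim n (fst p)) summable_on {p\<in>P. fst p \<le> s}"
    and path_eq: "\<And>s. s \<in> {0..T} \<Longrightarrow> n s = N0 + (\<integral>x\<in>{0..s}. (gb - gd * n x) \<partial>lborel)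
          + (\<Sum>\<^sub>\<infinity>p\<in>{p\<in>P. fst p \<le> s}. zb p - zd p * left_lim n (fst p))"
    and zd_summable: "zd summable_on {p\<in>P. fst p \<le> T}"
    and single_jumps: "\<And>p q. p \<in> P \<Longrightarrow> q \<in> P \<Longrightarrow> fst p \<le> T \<Longrightarrow> fst p = fst q \<Longrightarrow>
          zd p > 0 \<Longrightarrow> zd q > 0 \<Longrightarrow> p = q"
begin

definition drift :: "real \<Rightarrow> real" where "drift x = gb - gd * n x"
definition jump :: "point \<Rightarrow> real" where "jump p = zb p - zd p * left_lim n (fst p)"

lemma point_bounds:
  assumes "p \<in> P"
  shows "fst p \<ge> 0" "0 \<le> zd p" "zd p \<le> 1" "0 \<le> zb p" "zd p = 1 \<Longrightarrow> zb p > 0"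
  using points_in_space[OF assms] unfolding Zset_def by (auto simp: less_le)

lemma jump_summable_on: "s \<in> {0..T} \<Longrightarrow> A \<subseteq> {p\<in>P. fst p \<le> s} \<Longrightarrow> jump summable_on A"
  using jumps_summable summable_on_subset_banach unfolding jump_def by blast

lemma zd_summable_on: "A \<subseteq> {p\<in>P. fst p \<le> T} \<Longrightarrow> zd summable_on A"
  using zd_summable summable_on_subset_banach by blast

lemma drift_integrable_on:
  "s \<in> {0..T} \<Longrightarrow> A \<in> sets lborel \<Longrightarrow> A \<subseteq> {0..s} \<Longrightarrow> set_integrable lborel A drift"
  using drift_integrable set_integrable_subset unfolding drift_def by blast

lemma path_eq_drift_jump:
  "s \<in> {0..T} \<Longrightarrow> n s = N0 + (\<integral>x\<in>{0..s}. drift x \<partial>lborel) + (\<Sum>\<^sub>\<infinity>p\<in>{p\<in>P. fst p \<le> s}. jump p)"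
  using path_eq unfolding drift_def jump_def by auto

lemma path_increment:
  assumes "0 \<le> r" "r \<le> s" "s \<le> T"
  shows "n s - n r = (\<integral>x\<in>{r<..s}. drift x \<partial>lborel) + (\<Sum>\<^sub>\<infinity>p\<in>{p\<in>P. r < fst p \<and> fst p \<le> s}. jump p)"
proof -
  have "{0..s} = {0..r} \<union> {r<..s}" using assms by auto
  moreover have "(\<integral>x\<in>{0..r} \<union> {r<..s}. drift x \<partial>lborel)
      = (\<integral>x\<in>{0..r}. drift x \<partial>lborel) + (\<integral>x\<in>{r<..s}. drift x \<partial>lborel)"
    by (rule set_integral_Un) (use assms in \<open>auto intro!: drift_integrable_on[of s]\<close>)
  moreover have "{p\<in>P. fst p \<le> s} = {p\<in>P. fst p \<le> r} \<union> {p\<in>P. r < fst p \<and> fst p \<le> s}"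
    using assms by auto
  moreover have "(\<Sum>\<^sub>\<infinity>p\<in>{p\<in>P. fst p \<le> r} \<union> {p\<in>P. r < fst p \<and> fst p \<le> s}. jump p)
      = (\<Sum>\<^sub>\<infinity>p\<in>{p\<in>P. fst p \<le> r}. jump p) + (\<Sum>\<^sub>\<infinity>p\<in>{p\<in>P. r < fst p \<and> fst p \<le> s}. jump p)"
    by (rule infsum_Un_disjoint) (use assms in \<open>auto intro!: jump_summable_on[of s]\<close>)
  ultimately show ?thesis
    using path_eq_drift_jump[of s] path_eq_drift_jump[of r] assms by auto
qed

lemma drift_integral_ge:
  assumes "0 \<le> a" "a \<le> b" "b \<le> T" "\<And>y. y \<in> {a<..b} \<Longrightarrow> n y \<le> m"
  shows "- gd * m * (b - a) \<le> (\<integral>x\<in>{a<..b}. drift x \<partial>lborel)"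
proof -
  have "set_integrable lborel {a<..b} (\<lambda>_. - gd * m)"
    by (rule set_integrable_subset[OF borel_integrable_atLeastAtMost'[of a b "\<lambda>_. - gd * m"]]) auto
  moreover have "- gd * m \<le> drift y" if "y \<in> {a<..b}" for y
    using gb_nonneg mult_left_mono[OF assms(4)[OF that] gd_nonneg] unfolding drift_def by linarith
  ultimately have "(\<integral>x\<in>{a<..b}. - gd * m \<partial>lborel) \<le> (\<integral>x\<in>{a<..b}. drift x \<partial>lborel)"
    by (intro set_integral_mono drift_integrable_on[of b]) (use assms in auto)
  then show ?thesis using assms by (simp add: set_integral_const mult.commute)
qed

text \<open>While the path stays below \<open>m\<close>, it can only decrease through the drift
  \<open>-gd n\<close> and the jumps \<open>-zd n_-\<close>, both proportional to \<open>m\<close>.\<close>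
lemma path_drop_bound:
  assumes "0 \<le> r" "r \<le> s" "s \<le> T" "\<And>y. y \<in> {r..s} \<Longrightarrow> n y \<le> m"
  shows "n r - m * (gd * (s - r) + (\<Sum>\<^sub>\<infinity>p\<in>{p\<in>P. r < fst p \<and> fst p \<le> s}. zd p)) \<le> n s"
proof -
  let ?A = "{p\<in>P. r < fst p \<and> fst p \<le> s}"
  have I: "- gd * m * (s - r) \<le> (\<integral>x\<in>{r<..s}. drift x \<partial>lborel)"
    by (rule drift_integral_ge) (use assms in auto)
  have "zd summable_on ?A" by (rule zd_summable_on) (use assms in auto)
  then have zA: "(\<lambda>p. - zd p) summable_on ?A" by (simp add: summable_on_uminus)
  have "(\<Sum>\<^sub>\<infinity>p\<in>?A. - zd p * m) \<le> (\<Sum>\<^sub>\<infinity>p\<in>?A. jump p)"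
  proof (rule infsum_mono)
    show "(\<lambda>p. - zd p * m) summable_on ?A" by (rule summable_on_cmult_left[OF zA])
    show "jump summable_on ?A" by (rule jump_summable_on[of s]) (use assms in auto)
    fix p assume p: "p \<in> ?A"
    have "left_lim n (fst p) \<le> m"
      by (rule left_lim_le[OF cadlag _ _, of _ r]) (use p assms in auto)
    then show "- zd p * m \<le> jump p"
      using point_bounds[of p] p mult_left_mono[of "left_lim n (fst p)" m "zd p"]
      unfolding jump_def by auto
  qed
  moreover have "(\<Sum>\<^sub>\<infinity>p\<in>?A. - zd p * m) = - (\<Sum>\<^sub>\<infinity>p\<in>?A. zd p) * m"
    using zA by (subst infsum_cmult_left) (auto simp: infsum_uminus)
  ultimately show ?thesis using I path_increment[OF assms(1-3)] by (simp add: algebra_simps)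
qed

lemma jump_abs_summable: "(\<lambda>p. \<bar>jump p\<bar>) summable_on {p\<in>P. fst p \<le> T}"
proof -
  have "jump summable_on {p\<in>P. fst p \<le> T}" by (rule jump_summable_on) (use T_nonneg in auto)
  then have "(\<lambda>p. norm (jump p)) summable_on {p\<in>P. fst p \<le> T}"
    using summable_on_iff_abs_summable_on_real by blast
  then show ?thesis by simp
qed

lemma jumps_small_before:
  assumes "0 < \<tau>" "\<tau> \<le> T" "\<epsilon> > 0"
  obtains r where "0 \<le> r" "r < \<tau>"
    "\<And>A. A \<subseteq> {p\<in>P. r < fst p \<and> fst p < \<tau>} \<Longrightarrow> \<bar>infsum jump A\<bar> \<le> \<epsilon> \<and> infsum zd A \<le> \<epsilon>"
proof -
  define PT where "PT = {p\<in>P. fst p \<le> T}"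
  define h where "h p = \<bar>jump p\<bar> + zd p" for p
  have hs: "h summable_on PT" unfolding h_def PT_def
    by (rule summable_on_add[OF jump_abs_summable zd_summable])
  have "0 \<le> h p" if "p \<in> PT" for p using that point_bounds unfolding h_def PT_def by simp
  then obtain F where F: "finite F" "F \<subseteq> PT" "\<And>B. B \<subseteq> PT - F \<Longrightarrow> infsum h B \<le> \<epsilon>"
    using infsum_small_outside_finite[OF hs _ assms(3)] by blast
  define r where "r = Max (insert (\<tau>/2) (fst ` {p\<in>F. fst p < \<tau>}))"
  have fin: "finite (insert (\<tau>/2) (fst ` {p\<in>F. fst p < \<tau>}))" using F by auto
  show ?thesis
  proof (rule that[of r])
    have "\<tau>/2 \<le> r" unfolding r_def using fin by (intro Max_ge) auto
    then show "0 \<le> r" using assms by simp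
    show "r < \<tau>" unfolding r_def using fin assms by (subst Max_less_iff) auto
    fix A assume A: "A \<subseteq> {p\<in>P. r < fst p \<and> fst p < \<tau>}"
    have "fst p \<le> r" if "p \<in> F" "fst p < \<tau>" for p unfolding r_def using fin that by (intro Max_ge) auto
    then have APT: "A \<subseteq> PT - F" using A assms unfolding PT_def by fastforce
    have hA: "h summable_on A" by (rule summable_on_subset_banach[OF hs]) (use APT in auto)
    have jA: "(\<lambda>p. \<bar>jump p\<bar>) summable_on A"
      using APT jump_abs_summable summable_on_subset_banach unfolding PT_def by blast
    have "\<bar>infsum jump A\<bar> \<le> infsum (\<lambda>p. \<bar>jump p\<bar>) A"
      using norm_infsum_bound[of jump A] jA by (simp add: real_norm_def)
    also have "\<dots> \<le> infsum h A"
      by (rule infsum_mono[OF jA hA]) (use APT point_bounds in \<open>auto simp: h_def PT_def\<close>)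
    finally have "\<bar>infsum jump A\<bar> \<le> infsum h A" .
    moreover have "infsum zd A \<le> infsum h A"
      by (rule infsum_mono[OF zd_summable_on hA]) (use APT in \<open>auto simp: h_def PT_def\<close>)
    ultimately show "\<bar>infsum jump A\<bar> \<le> \<epsilon> \<and> infsum zd A \<le> \<epsilon>" using F(3)[OF APT] by linarith
  qed
qed

text \<open>\<open>(d, b)\<close> is the mark of the only point with \<open>zd > 0\<close> at time \<open>\<tau>\<close>, or
  \<open>(0, 0)\<close> if there is none.\<close>
lemma jump_sum_at_ge:
  assumes "\<tau> \<in> {0..T}"
  obtains d b where "0 \<le> d" "d \<le> 1" "0 \<le> b" "d = 1 \<Longrightarrow> b > 0"
    "b - d * left_lim n \<tau> \<le> infsum jump {p\<in>P. fst p = \<tau>}"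
proof -
  define Q where "Q = {p\<in>P. fst p = \<tau>}"
  have jump_Q: "jump p = zb p - zd p * left_lim n \<tau>" if "p \<in> Q" for p
    using that unfolding Q_def jump_def by simp
  have summable: "jump summable_on Q" by (rule jump_summable_on[of \<tau>]) (use assms in \<open>auto simp: Q_def\<close>)
  show ?thesis
  proof (cases "\<exists>q\<in>Q. zd q > 0")
    case True
    then obtain q where q: "q \<in> Q" "zd q > 0" by blast
    have others: "0 \<le> jump p" if p: "p \<in> Q - {q}" for p
    proof -
      have "\<not> zd p > 0" using single_jumps[of q p] p q assms unfolding Q_def by auto
      then have "zd p = 0" using point_bounds(2)[of p] p unfolding Q_def by auto
      then show ?thesis using jump_Q[of p] point_bounds(4)[of p] p unfolding Q_def by auto
    qed
    have "infsum jump Q = infsum jump ({q} \<union> (Q - {q}))" using q by (simp add: insert_absorb)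
    also have "\<dots> = jump q + infsum jump (Q - {q})"
      by (subst infsum_Un_disjoint) (use summable_on_subset_banach[OF summable] in auto)
    finally have "jump q \<le> infsum jump Q" using infsum_nonneg[of "Q - {q}" jump] others by simp
    moreover have "q \<in> P" using q unfolding Q_def by simp
    ultimately show ?thesis
      using point_bounds[of q] jump_Q[OF q(1)] that[of "zd q" "zb q"] unfolding Q_def by simp
  next
    case False
    have "0 \<le> infsum jump Q"
    proof (rule infsum_nonneg)
      fix p assume p: "p \<in> Q"
      then have "\<not> zd p > 0" using False by blast
      moreover have "p \<in> P" using p unfolding Q_def by simp
      ultimately show "0 \<le> jump p" using point_bounds(2,4)[of p] jump_Q[OF p] by simp
    qed
    then show ?thesis by (intro that[of 0 0]) (auto simp: Q_def)
  qed
qed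

lemma path_0_pos: "n 0 > 0"
proof -
  have "0 \<in> {0..T}" using T_nonneg by simp
  then obtain d b where db: "0 \<le> d" "d \<le> 1" "0 \<le> b" "d = 1 \<Longrightarrow> b > 0"
      "b - d * left_lim n 0 \<le> infsum jump {p\<in>P. fst p = 0}"
    using jump_sum_at_ge by blast
  have "{p\<in>P. fst p \<le> 0} = {p\<in>P. fst p = 0}" using point_bounds(1) by fastforce
  then have "n 0 = N0 + infsum jump {p\<in>P. fst p = 0}"
    using path_eq_drift_jump[of 0] T_nonneg set_integral_lborel_singleton[of 0 drift] by simp
  moreover have "b - d * n 0 \<le> infsum jump {p\<in>P. fst p = 0}" using db(5) by (simp add: left_lim_def)
  ultimately have "N0 + b \<le> n 0 + d * n 0" by linarith
  then have "0 < n 0 * (1 + d)" using N0_pos db(3) by (simp add: algebra_simps)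
  then show ?thesis by (rule zero_less_mult_pos2) (use db(1) in simp)
qed

lemma left_lim_add_jumps_le:
  assumes "0 < \<tau>" "\<tau> \<le> T"
  shows "left_lim n \<tau> + infsum jump {p\<in>P. fst p = \<tau>} \<le> n \<tau>"
proof (rule field_le_epsilon)
  fix e :: real assume "0 < e"
  define \<epsilon> where "\<epsilon> = e / 3"
  have \<epsilon>: "\<epsilon> > 0" using \<open>0 < e\<close> by (simp add: \<epsilon>_def)
  obtain C where C: "C \<ge> 0" "\<And>y. y \<in> {0..T} \<Longrightarrow> \<bar>n y\<bar> \<le> C \<and> \<bar>left_lim n y\<bar> \<le> C"
    using cadlag_bounded[OF cadlag] by blast
  define K where "K = gd * C"
  have K: "K \<ge> 0" unfolding K_def using gd_nonneg C by simp
  obtain r where r: "0 \<le> r" "r < \<tau>"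
    "\<And>A. A \<subseteq> {p\<in>P. r < fst p \<and> fst p < \<tau>} \<Longrightarrow> \<bar>infsum jump A\<bar> \<le> \<epsilon> \<and> infsum zd A \<le> \<epsilon>"
    using jumps_small_before[OF assms \<epsilon>] by blast
  obtain \<delta> where \<delta>: "\<delta> > 0" "\<And>y. \<tau> - \<delta> < y \<Longrightarrow> y < \<tau> \<Longrightarrow> \<bar>n y - left_lim n \<tau>\<bar> < \<epsilon>"
    using cadlag_left_near[OF cadlag assms(1) \<epsilon>] by blast
  define s where "s = max (max r (\<tau> - \<delta>/2)) (\<tau> - \<epsilon>/(K+1))"
  have s: "0 \<le> s" "r \<le> s" "\<tau> - \<delta> < s" "s < \<tau>" unfolding s_def using r \<delta> \<epsilon> K by auto
  have "(\<tau> - s) * K \<le> \<epsilon>/(K+1) * K" unfolding s_def using K by (intro mult_right_mono) auto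
  also have "\<dots> \<le> \<epsilon>" using K \<epsilon> by (simp add: field_simps)
  finally have "- \<epsilon> \<le> - gd * C * (\<tau> - s)" unfolding K_def by (simp add: algebra_simps)
  also have "\<dots> \<le> (\<integral>x\<in>{s<..\<tau>}. drift x \<partial>lborel)"
  proof (rule drift_integral_ge)
    fix y assume "y \<in> {s<..\<tau>}"
    then show "n y \<le> C" using C(2)[of y] s assms by auto
  qed (use s assms in auto)
  finally have drift: "- \<epsilon> \<le> (\<integral>x\<in>{s<..\<tau>}. drift x \<partial>lborel)" .
  define A where "A = {p\<in>P. s < fst p \<and> fst p < \<tau>}"
  define Q where "Q = {p\<in>P. fst p = \<tau>}"
  have "{p\<in>P. s < fst p \<and> fst p \<le> \<tau>} = A \<union> Q" unfolding A_def Q_def using s by auto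
  moreover have "infsum jump (A \<union> Q) = infsum jump A + infsum jump Q"
    by (rule infsum_Un_disjoint; (rule jump_summable_on[of \<tau>])?) (use assms s in \<open>auto simp: A_def Q_def\<close>)
  ultimately have "n \<tau> = n s + (\<integral>x\<in>{s<..\<tau>}. drift x \<partial>lborel) + infsum jump A + infsum jump Q"
    using path_increment[of s \<tau>] s assms by auto
  moreover have "A \<subseteq> {p\<in>P. r < fst p \<and> fst p < \<tau>}" unfolding A_def using s by auto
  then have "\<bar>infsum jump A\<bar> \<le> \<epsilon>" using r(3) by blast
  moreover have "\<bar>n s - left_lim n \<tau>\<bar> < \<epsilon>" using \<delta>(2)[of s] s by auto
  ultimately show "left_lim n \<tau> + infsum jump {p\<in>P. fst p = \<tau>} \<le> n \<tau> + e"
    using drift unfolding Q_def \<epsilon>_def by linarith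
qed

text \<open>Take \<open>\<rho> \<in> [r, s]\<close> where \<open>n\<close> exceeds half of its maximum \<open>m\<close> on \<open>[r, s]\<close>;
  by \<open>path_drop_bound\<close>, from \<open>\<rho>\<close> to \<open>s\<close> the path loses at most \<open>m/4\<close>.\<close>
lemma path_ge_quarter:
  assumes "0 \<le> r" "r \<le> s" "s \<le> T" "n r > 0" "gd * (s - r) \<le> 1/8"
    and "\<And>\<rho>. r \<le> \<rho> \<Longrightarrow> \<rho> \<le> s \<Longrightarrow> (\<Sum>\<^sub>\<infinity>p\<in>{p\<in>P. \<rho> < fst p \<and> fst p \<le> s}. zd p) \<le> 1/8"
  shows "n r / 4 \<le> n s"
proof -
  obtain C where C: "\<And>y. y \<in> {0..T} \<Longrightarrow> \<bar>n y\<bar> \<le> C \<and> \<bar>left_lim n y\<bar> \<le> C"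
    using cadlag_bounded[OF cadlag] by blast
  define m where "m = Sup (n ` {r..s})"
  have "n y \<le> C" if "y \<in> {r..s}" for y using C[of y] that assms(1,3) by auto
  then have bdd: "bdd_above (n ` {r..s})" by (rule bdd_aboveI2)
  have up: "n y \<le> m" if "y \<in> {r..s}" for y unfolding m_def using bdd that by (intro cSup_upper) auto
  have "n r \<le> m" using up[of r] assms(2) by auto
  then have m: "m > 0" using assms(4) by auto
  then have "m / 2 < Sup (n ` {r..s})" unfolding m_def[symmetric] by simp
  then obtain \<rho> where \<rho>: "r \<le> \<rho>" "\<rho> \<le> s" "m / 2 < n \<rho>"
    using less_cSup_iff[OF _ bdd, of "m / 2"] assms(2) by fastforce
  have drop: "n \<rho> - m * (gd * (s - \<rho>) + (\<Sum>\<^sub>\<infinity>p\<in>{p\<in>P. \<rho> < fst p \<and> fst p \<le> s}. zd p)) \<le> n s"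
    by (rule path_drop_bound) (use \<rho> assms up in auto)
  have "gd * (s - \<rho>) \<le> gd * (s - r)" using gd_nonneg \<rho> by (intro mult_left_mono) auto
  then have "m * (gd * (s - \<rho>) + (\<Sum>\<^sub>\<infinity>p\<in>{p\<in>P. \<rho> < fst p \<and> fst p \<le> s}. zd p)) \<le> m * (1/4)"
    using m assms(5) assms(6)[OF \<rho>(1,2)] by (intro mult_left_mono) auto
  then show ?thesis using drop \<rho> \<open>n r \<le> m\<close> by linarith
qed

lemma left_lim_pos_if_pos_before:
  assumes "0 < \<tau>" "\<tau> \<le> T" "\<And>s. 0 \<le> s \<Longrightarrow> s < \<tau> \<Longrightarrow> n s > 0"
  shows "left_lim n \<tau> > 0"
proof -
  have "(1/8::real) > 0" by simp
  then obtain r where r: "0 \<le> r" "r < \<tau>"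
    "\<And>A. A \<subseteq> {p\<in>P. r < fst p \<and> fst p < \<tau>} \<Longrightarrow> \<bar>infsum jump A\<bar> \<le> 1/8 \<and> infsum zd A \<le> 1/8"
    using jumps_small_before[OF assms(1,2)] by blast
  define r' where "r' = max r (\<tau> - 1/(8*(gd+1)))"
  have r': "0 \<le> r'" "r' < \<tau>" "r \<le> r'" unfolding r'_def using r gd_nonneg by auto
  have "gd * (\<tau> - r') \<le> gd * (1/(8*(gd+1)))"
    unfolding r'_def using gd_nonneg by (intro mult_left_mono) auto
  also have "\<dots> \<le> 1/8" using gd_nonneg by (simp add: field_simps)
  finally have gd_small: "gd * (\<tau> - r') \<le> 1/8" .
  have "n r' / 4 \<le> n s" if s: "r' < s" "s < \<tau>" for s
  proof (rule path_ge_quarter)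
    have "gd * (s - r') \<le> gd * (\<tau> - r')" using gd_nonneg s by (intro mult_left_mono) auto
    then show "gd * (s - r') \<le> 1/8" using gd_small by linarith
    fix \<rho> assume "r' \<le> \<rho>" "\<rho> \<le> s"
    then have "{p\<in>P. \<rho> < fst p \<and> fst p \<le> s} \<subseteq> {p\<in>P. r < fst p \<and> fst p < \<tau>}" using r' s by auto
    then show "(\<Sum>\<^sub>\<infinity>p\<in>{p\<in>P. \<rho> < fst p \<and> fst p \<le> s}. zd p) \<le> 1/8" using r(3) by blast
  qed (use r' s assms in auto)
  then have "n r' / 4 \<le> left_lim n \<tau>" by (rule left_lim_ge[OF cadlag assms(1) r'(2)])
  then show ?thesis using assms(3)[of r'] r' by linarith
qed

lemma pos_at_if_pos_before:
  assumes "0 < \<tau>" "\<tau> \<le> T" "\<And>s. 0 \<le> s \<Longrightarrow> s < \<tau> \<Longrightarrow> n s > 0"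
  shows "n \<tau> > 0 \<and> left_lim n \<tau> > 0"
proof -
  define L where "L = left_lim n \<tau>"
  have L: "L > 0" unfolding L_def by (rule left_lim_pos_if_pos_before[OF assms])
  obtain d b where db: "0 \<le> d" "d \<le> 1" "0 \<le> b" "d = 1 \<Longrightarrow> b > 0"
      "b - d * L \<le> infsum jump {p\<in>P. fst p = \<tau>}"
    using jump_sum_at_ge[of \<tau>] assms unfolding L_def by auto
  have "L + (b - d * L) \<le> n \<tau>" using left_lim_add_jumps_le[OF assms(1,2)] db(5) unfolding L_def by linarith
  moreover have "0 < L + (b - d * L)"
  proof (cases "d = 1")
    case False
    then have "0 < (1 - d) * L" using db L by simp
    then show ?thesis using db by (simp add: algebra_simps)
  qed (use db L in simp)
  ultimately show ?thesis using L unfolding L_def by linarith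
qed

lemma path_pos: "s \<in> {0..T} \<Longrightarrow> n s > 0 \<and> left_lim n s > 0"
proof -
  define S where "S = {r\<in>{0..T}. \<forall>s\<in>{0..r}. n s > 0 \<and> left_lim n s > 0}"
  have "0 \<in> S" unfolding S_def using path_0_pos T_nonneg by (auto simp: left_lim_def)
  have bdd: "bdd_above S" unfolding S_def by (rule bdd_aboveI[of _ T]) auto
  define \<tau> where "\<tau> = Sup S"
  have "0 \<le> \<tau>" unfolding \<tau>_def using \<open>0 \<in> S\<close> bdd by (rule cSup_upper)
  moreover have "\<tau> \<le> T" unfolding \<tau>_def using \<open>0 \<in> S\<close> by (intro cSup_least) (auto simp: S_def)
  ultimately have \<tau>: "0 \<le> \<tau>" "\<tau> \<le> T" by auto
  have below: "n s > 0 \<and> left_lim n s > 0" if s: "0 \<le> s" "s < \<tau>" for s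
  proof -
    obtain r where "r \<in> S" "s < r" using less_cSup_iff[OF _ bdd, of s] \<open>0 \<in> S\<close> s unfolding \<tau>_def by auto
    then show ?thesis using s unfolding S_def by auto
  qed
  have "\<tau> \<in> S"
  proof (cases "\<tau> = 0")
    case False
    then have "\<tau> > 0" using \<tau> by simp
    then have "n \<tau> > 0 \<and> left_lim n \<tau> > 0" using pos_at_if_pos_before \<tau>(2) below by blast
    then have "n s > 0 \<and> left_lim n s > 0" if "s \<in> {0..\<tau>}" for s
      using below[of s] that by (cases "s = \<tau>") auto
    then show ?thesis using \<tau> unfolding S_def by simp
  qed (use \<open>0 \<in> S\<close> in simp)
  moreover have "\<tau> = T"
  proof (rule ccontr)
    assume "\<tau> \<noteq> T"
    have "n \<tau> > 0" "left_lim n \<tau> > 0" using \<open>\<tau> \<in> S\<close> \<tau> unfolding S_def by auto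
    then obtain d where "d > 0" and d: "\<And>y. 0 \<le> y \<Longrightarrow> \<bar>y - \<tau>\<bar> < d \<Longrightarrow> n y > 0 \<and> left_lim n y > 0"
      using cadlag_pos_near[OF cadlag \<tau>(1)] by blast
    define \<tau>' where "\<tau>' = min T (\<tau> + d/2)"
    have "n s > 0 \<and> left_lim n s > 0" if s: "s \<in> {0..\<tau>'}" for s
    proof (cases "s \<le> \<tau>")
      case True then show ?thesis using \<open>\<tau> \<in> S\<close> s unfolding S_def by auto
    next
      case False then show ?thesis
        using d[of s] s \<open>d > 0\<close> unfolding \<tau>'_def by auto
    qed
    then have "\<tau>' \<in> S" using \<tau> \<open>d > 0\<close> unfolding S_def \<tau>'_def by auto
    then have "\<tau>' \<le> \<tau>" unfolding \<tau>_def using bdd by (rule cSup_upper)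
    then show False using \<tau> \<open>\<tau> \<noteq> T\<close> \<open>d > 0\<close> unfolding \<tau>'_def by auto
  qed
  ultimately show "s \<in> {0..T} \<Longrightarrow> n s > 0 \<and> left_lim n s > 0" unfolding S_def by auto
qed

text \<open>Points with \<open>zd > 1/2\<close> contribute at most \<open>1 < 2 zd\<close>; for the others the
  denominator of \<open>zbar\<close> is at least \<open>c/2\<close>.\<close>
lemma zbar_bounds:
  assumes "p \<in> P" "c > 0" "c \<le> left_lim n (fst p)"
  shows "0 \<le> zbar n p" "zbar n p \<le> 2 * zd p + 2 / c * zb p"
proof -
  define D where "D = (1 - zd p) * left_lim n (fst p) + zb p"
  have zbar: "zbar n p = zb p / D" unfolding zbar_def D_def ..
  have z: "0 \<le> zd p" "zd p \<le> 1" "0 \<le> zb p" "zd p = 1 \<Longrightarrow> zb p > 0" using point_bounds[OF assms(1)] by auto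
  have L: "left_lim n (fst p) > 0" using assms by simp
  have "zb p \<le> D" unfolding D_def using z L by simp
  moreover have "D > 0"
  proof (cases "zd p = 1")
    case False
    then have "(1 - zd p) * left_lim n (fst p) > 0" using z L by simp
    then show ?thesis unfolding D_def using z by linarith
  qed (use z in \<open>simp add: D_def\<close>)
  ultimately have le1: "zbar n p \<le> 1" unfolding zbar by simp
  show "0 \<le> zbar n p" unfolding zbar using \<open>D > 0\<close> z by simp
  show "zbar n p \<le> 2 * zd p + 2 / c * zb p"
  proof (cases "zd p > 1/2")
    case True
    moreover have "0 \<le> 2 / c * zb p" using z assms(2) by simp
    ultimately show ?thesis using le1 by linarith
  next
    case False
    then have "c / 2 \<le> (1 - zd p) * left_lim n (fst p)"
      using assms(2,3) mult_mono[of "1/2" "1 - zd p" c "left_lim n (fst p)"] by simp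
    then have "c / 2 \<le> D" unfolding D_def using z by simp
    then have "zbar n p \<le> zb p / (c / 2)"
      unfolding zbar using z assms(2) by (intro divide_left_mono) auto
    then show ?thesis using z by (simp add: field_simps)
  qed
qed

lemma zbar_summable: "zbar n summable_on {p\<in>P. fst p \<le> T}"
proof -
  define PT where "PT = {p\<in>P. fst p \<le> T}"
  have time: "fst p \<in> {0..T}" if "p \<in> PT" for p using that point_bounds(1)[of p] unfolding PT_def by auto
  obtain C where C: "C \<ge> 0" "\<And>y. y \<in> {0..T} \<Longrightarrow> \<bar>n y\<bar> \<le> C \<and> \<bar>left_lim n y\<bar> \<le> C"
    using cadlag_bounded[OF cadlag] by blast
  obtain c where c: "c > 0" "\<And>y. y \<in> {0..T} \<Longrightarrow> c \<le> n y \<and> c \<le> left_lim n y"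
    using cadlag_pos_bounded_below[OF cadlag path_pos] by blast
  have "(\<lambda>p. norm (zd p * left_lim n (fst p))) summable_on PT"
  proof (rule summable_on_comparison_test)
    show "(\<lambda>p. zd p * C) summable_on PT" unfolding PT_def by (rule summable_on_cmult_left[OF zd_summable])
    fix p assume p: "p \<in> PT"
    then show "norm (zd p * left_lim n (fst p)) \<le> zd p * C"
      using C(2)[OF time[OF p]] point_bounds(2)[of p] unfolding PT_def
      by (auto simp: abs_mult intro: mult_left_mono)
  qed simp
  then have "(\<lambda>p. zd p * left_lim n (fst p)) summable_on PT"
    using summable_on_iff_abs_summable_on_real by blast
  moreover have "jump summable_on PT" unfolding PT_def using jump_summable_on[of T] T_nonneg by auto
  ultimately have "(\<lambda>p. jump p + zd p * left_lim n (fst p)) summable_on PT" by (rule summable_on_add[rotated])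
  then have "zb summable_on PT" unfolding jump_def by simp
  then have "(\<lambda>p. 2 * zd p + 2 / c * zb p) summable_on PT"
    using zd_summable unfolding PT_def by (intro summable_on_add summable_on_cmult_right)
  then show ?thesis unfolding PT_def
    by (rule summable_on_comparison_test) (use zbar_bounds c time in \<open>auto simp: PT_def\<close>)
qed

end

lemma sde_pathI:
  assumes "solves_sde \<gamma> N0 P n" "fst \<gamma> \<ge> 0" "snd \<gamma> \<ge> 0" "N0 > 0" "T \<ge> 0"
    and "\<And>p. p \<in> P \<Longrightarrow> fst p \<ge> 0 \<and> fst (snd p) \<in> Zset"
    and "zd summable_on {p\<in>P. fst p \<le> T}"
    and "\<And>p q. p \<in> P \<Longrightarrow> q \<in> P \<Longrightarrow> fst p \<le> T \<Longrightarrow> fst p = fst q \<Longrightarrow> zd p > 0 \<Longrightarrow> zd q > 0 \<Longrightarrow> p = q"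
  shows "sde_path (fst \<gamma>) (snd \<gamma>) N0 P n T"
  using assms unfolding solves_sde_def sde_path_def by auto


section \<open>The Poisson distribution\<close>

lemma sums_poisson_mean: "(\<lambda>k. real k * (l ^ k / fact k * exp (- l))) sums (l::real)"
proof -
  have "(\<lambda>k. (l * exp (- l)) * (l ^ k / fact k)) sums ((l * exp (- l)) * exp l)"
    by (rule sums_mult) (use exp_converges[of l] in \<open>simp add: divide_inverse_commute scaleR_conv_of_real\<close>)
  moreover have "(l * exp (- l)) * exp l = l" by (simp add: exp_minus field_simps)
  ultimately have "(\<lambda>k. (l * exp (- l)) * (l ^ k / fact k)) sums l" by simp
  moreover have shift: "real (Suc k) * (l ^ Suc k / fact (Suc k) * exp (- l)) = (l * exp (- l)) * (l ^ k / fact k)" for k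
  proof -
    have "(fact (Suc k)::real) = real (Suc k) * fact k" by (simp only: fact_Suc of_nat_mult)
    then show ?thesis by (simp only: power_Suc) (simp add: field_simps del: of_nat_Suc)
  qed
  ultimately have "(\<lambda>k. real (Suc k) * (l ^ Suc k / fact (Suc k) * exp (- l))) sums l" by (simp only: shift)
  then show ?thesis by (subst (asm) sums_Suc_iff) simp
qed

context
  fixes M :: "'a measure" and X :: "'a \<Rightarrow> nat" and l :: real
  assumes prob: "prob_space M" and X: "X \<in> measurable M (count_space UNIV)" and l: "l \<ge> 0"
    and poisson: "\<And>k. measure M {\<omega>\<in>space M. X \<omega> = k} = l ^ k / fact k * exp (- l)"
begin

lemma nn_integral_poisson: "(\<integral>\<^sup>+\<omega>. of_nat (X \<omega>) \<partial>M) = ennreal l"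
proof -
  interpret prob_space M by (rule prob)
  define S where "S k = {\<omega>\<in>space M. X \<omega> = k}" for k
  have S: "S k \<in> sets M" for k unfolding S_def using X by measurable
  have "of_nat (X \<omega>) = (\<Sum>k. of_nat k * indicator (S k) \<omega> :: ennreal)" if "\<omega> \<in> space M" for \<omega>
  proof -
    have "(\<lambda>k. of_nat k * indicator (S k) \<omega> :: ennreal) = (\<lambda>k. if k = X \<omega> then of_nat k else 0)"
      using that by (auto simp: S_def fun_eq_iff)
    then show ?thesis using sums_single[of "X \<omega>" "of_nat :: nat \<Rightarrow> ennreal"] by (simp add: sums_iff)
  qed
  then have "(\<integral>\<^sup>+\<omega>. of_nat (X \<omega>) \<partial>M) = (\<integral>\<^sup>+\<omega>. (\<Sum>k. of_nat k * indicator (S k) \<omega>) \<partial>M)"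
    by (intro nn_integral_cong) simp
  also have "\<dots> = (\<Sum>k. \<integral>\<^sup>+\<omega>. of_nat k * indicator (S k) \<omega> \<partial>M)"
    by (rule nn_integral_suminf) (use S in auto)
  also have "\<dots> = (\<Sum>k. ennreal (real k * (l ^ k / fact k * exp (- l))))"
  proof (rule suminf_cong)
    fix k
    have "(\<integral>\<^sup>+\<omega>. of_nat k * indicator (S k) \<omega> \<partial>M) = ennreal (real k) * ennreal (l ^ k / fact k * exp (- l))"
      using S poisson[of k] emeasure_eq_measure
      by (simp add: nn_integral_cmult_indicator S_def ennreal_of_nat_eq_real_of_nat)
    then show "(\<integral>\<^sup>+\<omega>. of_nat k * indicator (S k) \<omega> \<partial>M) = ennreal (real k * (l ^ k / fact k * exp (- l)))"
      using l by (simp add: ennreal_mult[symmetric])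
  qed
  also have "\<dots> = ennreal l"
    by (rule suminf_ennreal_eq[OF _ sums_poisson_mean]) (use l in auto)
  finally show ?thesis .
qed

lemma prob_poisson_ge_2: "measure M {\<omega>\<in>space M. 2 \<le> X \<omega>} \<le> l\<^sup>2"
proof -
  interpret prob_space M by (rule prob)
  define S where "S = {\<omega>\<in>space M. X \<omega> = 0} \<union> {\<omega>\<in>space M. X \<omega> = 1}"
  have sets: "{\<omega>\<in>space M. X \<omega> = k} \<in> sets M" for k using X by measurable
  have "measure M S = measure M {\<omega>\<in>space M. X \<omega> = 0} + measure M {\<omega>\<in>space M. X \<omega> = 1}"
    unfolding S_def by (rule finite_measure_Union[OF sets sets]) auto
  also have "\<dots> = (1 + l) * exp (- l)" using poisson[of 0] poisson[of 1] by (simp add: algebra_simps)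
  moreover have "{\<omega>\<in>space M. 2 \<le> X \<omega>} = space M - S" unfolding S_def by auto
  ultimately have "measure M {\<omega>\<in>space M. 2 \<le> X \<omega>} = 1 - (1 + l) * exp (- l)"
    using prob_compl[of S] sets unfolding S_def by auto
  also have "\<dots> \<le> l\<^sup>2"
  proof -
    have "(1 + l) * (1 - l) \<le> (1 + l) * exp (- l)"
      using exp_ge_add_one_self[of "- l"] l by (intro mult_left_mono) auto
    then show ?thesis by (simp add: power2_eq_square algebra_simps)
  qed
  finally show ?thesis .
qed

end


section \<open>The intensity measure\<close>

abbreviation unif_seq :: "(nat \<Rightarrow> real) measure" where
  "unif_seq \<equiv> \<Pi>\<^sub>M i\<in>(UNIV::nat set). uniform_measure lborel {0..1::real}"

lemma prob_space_unif_seq: "prob_space unif_seq"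
  by (rule prob_space_PiM) (rule prob_space_uniform_measure, auto)

lemma space_intensity: "space (intensity Pm) = {0..} \<times> (space Pm \<times> space unif_seq)"
  unfolding intensity_def by (simp add: space_pair_measure)

lemma intensity_box:
  assumes "sigma_finite_measure Pm" "B \<in> sets Pm" "0 \<le> a"
  shows "{a..b} \<times> (B \<times> space unif_seq) \<in> sets (intensity Pm)"
    and "emeasure (intensity Pm) ({a..b} \<times> (B \<times> space unif_seq)) = ennreal (b - a) * emeasure Pm B"
proof -
  interpret U: prob_space unif_seq by (rule prob_space_unif_seq)
  have ab: "{a..b} \<in> sets (restrict_space lborel {0..})" using assms(3) by (subst sets_restrict_space_iff) auto
  have BU: "B \<times> space unif_seq \<in> sets (Pm \<Otimes>\<^sub>M unif_seq)" using assms(2) by auto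
  show "{a..b} \<times> (B \<times> space unif_seq) \<in> sets (intensity Pm)"
    unfolding intensity_def using BU ab by auto
  have "emeasure (Pm \<Otimes>\<^sub>M unif_seq) (B \<times> space unif_seq) = emeasure Pm B"
    using U.sigma_finite_measure_axioms assms(2)
    by (simp add: sigma_finite_measure.emeasure_pair_measure_Times U.emeasure_space_1)
  moreover have "emeasure (restrict_space lborel {0..}) {a..b} = ennreal (b - a)"
    using assms(3) by (subst emeasure_restrict_space) (auto, cases "a \<le> b", auto simp: ennreal_neg)
  moreover have "sigma_finite_measure (Pm \<Otimes>\<^sub>M unif_seq)"
    by (rule sigma_finite_pair_measure[OF assms(1) U.sigma_finite_measure_axioms])
  ultimately show "emeasure (intensity Pm) ({a..b} \<times> (B \<times> space unif_seq)) = ennreal (b - a) * emeasure Pm B"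
    unfolding intensity_def using sigma_finite_measure.emeasure_pair_measure_Times[OF _ ab BU] by simp
qed

lemma ex_power_half_bracket:
  assumes "0 < x" "x \<le> (1::real)"
  obtains k where "(1/2)^Suc k < x" "x \<le> (1/2)^k"
proof -
  obtain N where N: "(1/2::real)^N < x" using real_arch_pow_inv[OF assms(1), of "1/2"] by auto
  define k0 where "k0 = (LEAST k. (1/2::real)^k < x)"
  have k0: "(1/2::real)^k0 < x" unfolding k0_def by (rule LeastI[of _ N]) (rule N)
  then obtain k where k: "k0 = Suc k" using assms by (cases k0) auto
  have "\<not> (1/2::real)^k < x" using not_less_Least[of k "\<lambda>k. (1/2::real)^k < x"] k unfolding k0_def by auto
  then show ?thesis using k0 k that by auto
qed

definition dyadic_shell :: "nat \<Rightarrow> (real \<times> real) set" where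
  "dyadic_shell k = {z\<in>Zset. (1/2)^Suc k < fst z \<and> fst z \<le> (1/2)^k}"

lemma disjoint_dyadic_shell: "disjoint_family dyadic_shell"
proof -
  have "dyadic_shell a \<inter> dyadic_shell b = {}" if "a < b" for a b
  proof -
    have "(1/2::real)^b \<le> (1/2)^(Suc a)" using that by (intro power_decreasing) auto
    then show ?thesis unfolding dyadic_shell_def by auto
  qed
  then show ?thesis unfolding disjoint_family_on_def by (metis inf_commute linorder_neqE_nat)
qed

lemma zd_le_dyadic_sum:
  assumes "z \<in> Zset"
  shows "ennreal (fst z) \<le> (\<Sum>k. ennreal ((1/2)^k) * indicator (dyadic_shell k) z)"
proof (cases "fst z = 0")
  case False
  define f where "f k = ennreal ((1/2)^k) * indicator (dyadic_shell k) z" for k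
  have "0 < fst z" "fst z \<le> 1" using False assms unfolding Zset_def by (auto simp: less_le)
  then obtain k where k: "(1/2)^Suc k < fst z" "fst z \<le> (1/2)^k" by (rule ex_power_half_bracket)
  then have "ennreal (fst z) \<le> f k"
    using assms by (simp add: f_def dyadic_shell_def ennreal_leI)
  also have "\<dots> \<le> suminf f" using sum_le_suminf[OF summableI, of "{k}" f] by simp
  finally show ?thesis unfolding f_def .
qed simp

lemma dyadic_sum_le_zd:
  "(\<Sum>k. ennreal ((1/2)^k) * indicator (dyadic_shell k) z) \<le> 2 * ennreal (fst z)"
proof -
  have each: "ennreal ((1/2)^k) * indicator (dyadic_shell k) z \<le> 2 * ennreal (fst z) * indicator (dyadic_shell k) z" for k
  proof (cases "z \<in> dyadic_shell k")
    case True
    then have le: "(1/2::real)^k \<le> 2 * fst z" and "0 \<le> fst z" unfolding dyadic_shell_def Zset_def by auto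
    have "ennreal ((1/2)^k) \<le> ennreal (2 * fst z)" using le by (rule ennreal_leI)
    also have "\<dots> = 2 * ennreal (fst z)" using \<open>0 \<le> fst z\<close> by (subst ennreal_mult'') auto
    finally show ?thesis using True by simp
  qed simp
  have "(\<Sum>k. ennreal ((1/2)^k) * indicator (dyadic_shell k) z) \<le> (\<Sum>k. 2 * ennreal (fst z) * indicator (dyadic_shell k) z)"
    by (rule suminf_le[OF each]) auto
  also have "\<dots> = 2 * ennreal (fst z) * indicator (\<Union>k. dyadic_shell k) z"
    by (simp add: ennreal_suminf_cmult suminf_indicator[OF disjoint_dyadic_shell])
  also have "\<dots> \<le> 2 * ennreal (fst z)" by (simp add: indicator_def)
  finally show ?thesis .
qed

context
  fixes \<gamma> and Pm :: "(real \<times> real) measure"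
  assumes char: "characteristic \<gamma> Pm"
begin

lemma characteristic_space: "space Pm = Zset"
  using char sets_eq_imp_space_eq[of Pm "restrict_space borel Zset"]
  unfolding characteristic_def by (simp add: space_restrict_space)

lemma characteristic_setsI: "S \<in> sets borel \<Longrightarrow> Zset \<inter> S \<in> sets Pm"
  using char unfolding characteristic_def sets_restrict_space by auto

lemma nn_integral_zd_finite: "(\<integral>\<^sup>+z. ennreal (fst z) \<partial>Pm) < \<infinity>"
proof -
  have "integrable Pm fst" using char unfolding characteristic_def by auto
  then have "(\<integral>\<^sup>+z. ennreal (norm (fst z)) \<partial>Pm) < \<infinity>" by (simp add: integrable_iff_bounded)
  moreover have "(\<integral>\<^sup>+z. ennreal (norm (fst z)) \<partial>Pm) = (\<integral>\<^sup>+z. ennreal (fst z) \<partial>Pm)"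
    by (rule nn_integral_cong) (auto simp: characteristic_space Zset_def)
  ultimately show ?thesis by simp
qed

lemma zd_measurable [measurable]: "(\<lambda>z. ennreal (fst z)) \<in> borel_measurable Pm"
proof -
  have "fst \<in> borel_measurable Pm" using char unfolding characteristic_def by auto
  then show ?thesis by measurable
qed

lemma zd_ge_sets: "{z\<in>Zset. c \<le> fst z} \<in> sets Pm"
proof -
  have "{z::real \<times> real. c \<le> fst z} \<in> sets borel"
    by (intro borel_closed closed_Collect_le continuous_intros)
  then show ?thesis using characteristic_setsI[of "{z. c \<le> fst z}"] by (simp add: Int_def)
qed

lemma emeasure_zd_ge_finite:
  assumes "c > 0"
  shows "emeasure Pm {z\<in>Zset. c \<le> fst z} < \<infinity>"
proof -
  note sets = zd_ge_sets[of c]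
  have "emeasure Pm {z\<in>Zset. c \<le> fst z} \<le> (\<integral>\<^sup>+z. ennreal (1 / c) * ennreal (fst z) \<partial>Pm)"
  proof (subst nn_integral_indicator[OF sets, symmetric], rule nn_integral_mono)
    fix z assume "z \<in> space Pm"
    have "indicator {z\<in>Zset. c \<le> fst z} z \<le> ennreal (fst z / c)"
      using assms by (auto simp: indicator_def field_simps)
    moreover have "fst z \<ge> 0" using \<open>z \<in> space Pm\<close> by (auto simp: characteristic_space Zset_def)
    then have "ennreal (fst z / c) = ennreal (1 / c) * ennreal (fst z)"
      using ennreal_mult[of "1 / c" "fst z"] assms by simp
    ultimately show "indicator {z\<in>Zset. c \<le> fst z} z \<le> ennreal (1 / c) * ennreal (fst z)" by simp
  qed
  also have "\<dots> = ennreal (1 / c) * (\<integral>\<^sup>+z. ennreal (fst z) \<partial>Pm)"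
    by (rule nn_integral_cmult) measurable
  also have "\<dots> < \<infinity>" using nn_integral_zd_finite by (simp add: ennreal_mult_less_top)
  finally show ?thesis .
qed

lemma dyadic_shell_sets: "dyadic_shell k \<in> sets Pm"
proof -
  have "{z::real \<times> real. (1/2)^Suc k < fst z} \<in> sets borel" "{z::real \<times> real. fst z \<le> (1/2)^k} \<in> sets borel"
    by (intro borel_open borel_closed open_Collect_less closed_Collect_le continuous_intros)+
  then have "{z::real \<times> real. (1/2)^Suc k < fst z \<and> fst z \<le> (1/2)^k} \<in> sets borel"
    by (auto simp: Collect_conj_eq)
  moreover have "dyadic_shell k = Zset \<inter> {z. (1/2)^Suc k < fst z \<and> fst z \<le> (1/2)^k}"
    unfolding dyadic_shell_def by auto
  ultimately show ?thesis using characteristic_setsI by simp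
qed

lemma emeasure_dyadic_shell_finite: "emeasure Pm (dyadic_shell k) < \<infinity>"
proof -
  have "dyadic_shell k \<subseteq> {z\<in>Zset. (1/2)^Suc k \<le> fst z}" unfolding dyadic_shell_def by auto
  then have "emeasure Pm (dyadic_shell k) \<le> emeasure Pm {z\<in>Zset. (1/2)^Suc k \<le> fst z}"
    by (intro emeasure_mono zd_ge_sets)
  then show ?thesis using emeasure_zd_ge_finite[of "(1/2)^Suc k"] by simp
qed

lemma weighted_dyadic_measure_finite: "(\<Sum>k. ennreal ((1/2)^k) * emeasure Pm (dyadic_shell k)) < \<infinity>"
proof -
  have "(\<Sum>k. ennreal ((1/2)^k) * emeasure Pm (dyadic_shell k))
      = (\<Sum>k. \<integral>\<^sup>+z. ennreal ((1/2)^k) * indicator (dyadic_shell k) z \<partial>Pm)"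
    using dyadic_shell_sets by (simp add: nn_integral_cmult_indicator)
  also have "\<dots> = (\<integral>\<^sup>+z. (\<Sum>k. ennreal ((1/2)^k) * indicator (dyadic_shell k) z) \<partial>Pm)"
    by (rule nn_integral_suminf[symmetric]) (use dyadic_shell_sets in measurable)
  also have "\<dots> \<le> (\<integral>\<^sup>+z. 2 * ennreal (fst z) \<partial>Pm)" by (intro nn_integral_mono dyadic_sum_le_zd)
  also have "\<dots> = 2 * (\<integral>\<^sup>+z. ennreal (fst z) \<partial>Pm)" by (rule nn_integral_cmult) (rule zd_measurable)
  also have "\<dots> < \<infinity>" using nn_integral_zd_finite by (simp add: ennreal_mult_less_top)
  finally show ?thesis .
qed

end


section \<open>Almost sure properties of the point process\<close>

lemma sum_le_weighted_counts:
  fixes f :: "'a \<Rightarrow> real"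
  assumes "finite G" "G \<subseteq> Q" "\<And>k. finite (Q \<inter> A k)" "\<And>p. p \<in> G \<Longrightarrow> 0 \<le> f p"
    and "\<And>p. p \<in> G \<Longrightarrow> ennreal (f p) \<le> (\<Sum>k. ennreal (w k) * indicator (A k) p)"
  shows "ennreal (sum f G) \<le> (\<Sum>k. ennreal (w k) * of_nat (card (Q \<inter> A k)))"
proof -
  have "ennreal (sum f G) = (\<Sum>p\<in>G. ennreal (f p))" using assms(4) by (rule sum_ennreal[symmetric])
  also have "\<dots> \<le> (\<Sum>p\<in>G. \<Sum>k. ennreal (w k) * indicator (A k) p)" by (rule sum_mono) (rule assms(5))
  also have "\<dots> = (\<Sum>k. \<Sum>p\<in>G. ennreal (w k) * indicator (A k) p)"
    by (rule suminf_sum[symmetric]) auto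
  also have "\<dots> = (\<Sum>k. ennreal (w k) * of_nat (card (G \<inter> A k)))"
    using assms(1) by (simp add: sum_distrib_left[symmetric] sum.inter_restrict[symmetric] indicator_def)
  also have "\<dots> \<le> (\<Sum>k. ennreal (w k) * of_nat (card (Q \<inter> A k)))"
    using assms(2,3) by (intro suminf_le mult_left_mono) (auto intro: card_mono)
  finally show ?thesis .
qed

lemma interval_slice_index:
  fixes s t :: real
  assumes "0 \<le> s" "s \<le> t"
  obtains i where "i \<le> m" "real i * t / real (Suc m) \<le> s" "s \<le> real (Suc i) * t / real (Suc m)"
proof (cases "t = 0")
  case True
  then show ?thesis using assms that[of 0] by auto
next
  case False
  then have t: "t > 0" using assms by auto
  define x where "x = s * real (Suc m) / t"
  have "s * real (Suc m) \<le> t * real (Suc m)" using assms by (intro mult_right_mono) auto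
  then have x: "0 \<le> x" "x \<le> real (Suc m)" unfolding x_def using assms t by (auto simp: field_simps)
  define k where "k = nat \<lfloor>x\<rfloor>"
  have k: "real k \<le> x" "x < real k + 1" unfolding k_def using x(1) by linarith+
  define i where "i = min m k"
  have "real i \<le> x" "x \<le> real (Suc i)" unfolding i_def using k x by (auto simp: min_def)
  then have "real i * t / real (Suc m) \<le> s" "s \<le> real (Suc i) * t / real (Suc m)"
    unfolding x_def using t by (simp_all add: field_simps del: of_nat_Suc)
  then show ?thesis using that[of i] by (simp add: i_def)
qed

definition slice :: "real \<Rightarrow> nat \<Rightarrow> nat \<Rightarrow> (real \<times> real) set \<Rightarrow> point set" where
  "slice t m i B = {real i * t / real (Suc m) .. real (Suc i) * t / real (Suc m)} \<times> (B \<times> space unif_seq)"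

definition dyadic_box :: "real \<Rightarrow> nat \<Rightarrow> point set" where
  "dyadic_box t k = {0..t} \<times> (dyadic_shell k \<times> space unif_seq)"

locale poisson_intensity =
  fixes \<gamma> :: "real \<times> real" and Pm :: "(real \<times> real) measure"
    and M :: "'w measure" and \<xi> :: "'w \<Rightarrow> point set"
  assumes char: "characteristic \<gamma> Pm"
    and ppp: "poisson_point_process M (intensity Pm) \<xi>"
begin

lemma prob_space_M: "prob_space M"
  using ppp unfolding poisson_point_process_def by auto

lemma sigma_finite_Pm: "sigma_finite_measure Pm"
  using char unfolding characteristic_def by auto

lemma points_in_space:
  assumes "\<omega> \<in> space M" "p \<in> \<xi> \<omega>"
  shows "fst p \<ge> 0 \<and> fst (snd p) \<in> Zset \<and> snd (snd p) \<in> space unif_seq"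
proof -
  have "p \<in> space (intensity Pm)" using ppp assms unfolding poisson_point_process_def by blast
  then show ?thesis unfolding space_intensity characteristic_space[OF char] by (simp add: mem_Times_iff)
qed

context
  fixes A assumes A: "A \<in> sets (intensity Pm)" "emeasure (intensity Pm) A < \<infinity>"
begin

lemma AE_finite_points: "AE \<omega> in M. finite (\<xi> \<omega> \<inter> A)"
  using ppp A unfolding poisson_point_process_def by auto

lemma count_measurable: "(\<lambda>\<omega>. card (\<xi> \<omega> \<inter> A)) \<in> measurable M (count_space UNIV)"
  using ppp A unfolding poisson_point_process_def by auto

lemma count_poisson:
  "measure M {\<omega>\<in>space M. card (\<xi> \<omega> \<inter> A) = k}
     = measure (intensity Pm) A ^ k / fact k * exp (- measure (intensity Pm) A)"
  using ppp A unfolding poisson_point_process_def by auto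

lemma nn_integral_count: "(\<integral>\<^sup>+\<omega>. of_nat (card (\<xi> \<omega> \<inter> A)) \<partial>M) = emeasure (intensity Pm) A"
  using nn_integral_poisson[OF prob_space_M count_measurable _ count_poisson] A(2)
  by (simp add: emeasure_eq_ennreal_measure)

lemma prob_count_ge_2:
  "measure M {\<omega>\<in>space M. 2 \<le> card (\<xi> \<omega> \<inter> A)} \<le> (measure (intensity Pm) A)\<^sup>2"
  by (rule prob_poisson_ge_2[OF prob_space_M count_measurable _ count_poisson]) simp

end

lemma nn_integral_weighted_counts:
  assumes "\<And>k. A k \<in> sets (intensity Pm)" "\<And>k. emeasure (intensity Pm) (A k) < \<infinity>"
  shows "(\<integral>\<^sup>+\<omega>. (\<Sum>k. ennreal (w k) * of_nat (card (\<xi> \<omega> \<inter> A k))) \<partial>M)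
           = (\<Sum>k. ennreal (w k) * emeasure (intensity Pm) (A k))"
proof -
  have [measurable]: "(\<lambda>\<omega>. of_nat (card (\<xi> \<omega> \<inter> A k)) :: ennreal) \<in> borel_measurable M" for k
    using measurable_compose[OF count_measurable[OF assms(1,2)], of "of_nat" borel] by simp
  have "(\<integral>\<^sup>+\<omega>. (\<Sum>k. ennreal (w k) * of_nat (card (\<xi> \<omega> \<inter> A k))) \<partial>M)
      = (\<Sum>k. \<integral>\<^sup>+\<omega>. ennreal (w k) * of_nat (card (\<xi> \<omega> \<inter> A k)) \<partial>M)"
    by (rule nn_integral_suminf) measurable
  also have "\<dots> = (\<Sum>k. ennreal (w k) * emeasure (intensity Pm) (A k))"
    by (simp add: nn_integral_cmult nn_integral_count[OF assms(1,2)])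
  finally show ?thesis .
qed

lemma intensity_dyadic_box:
  assumes "t \<ge> 0"
  shows "dyadic_box t k \<in> sets (intensity Pm)"
    and "emeasure (intensity Pm) (dyadic_box t k) = ennreal t * emeasure Pm (dyadic_shell k)"
    and "emeasure (intensity Pm) (dyadic_box t k) < \<infinity>"
  using intensity_box[OF sigma_finite_Pm dyadic_shell_sets[OF char] order_refl, of t]
    emeasure_dyadic_shell_finite[OF char, of k] assms
  by (auto simp: dyadic_box_def ennreal_mult_less_top)

lemma AE_dyadic_counts_finite:
  assumes "t \<ge> 0"
  shows "AE \<omega> in M. (\<Sum>k. ennreal ((1/2)^k) * of_nat (card (\<xi> \<omega> \<inter> dyadic_box t k))) \<noteq> \<infinity>"
proof (rule nn_integral_PInf_AE)
  have [measurable]: "(\<lambda>\<omega>. of_nat (card (\<xi> \<omega> \<inter> dyadic_box t k)) :: ennreal) \<in> borel_measurable M" for k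
    using measurable_compose[OF count_measurable[OF intensity_dyadic_box(1,3)[OF assms]], of "of_nat" borel] by simp
  show "(\<lambda>\<omega>. \<Sum>k. ennreal ((1/2)^k) * of_nat (card (\<xi> \<omega> \<inter> dyadic_box t k))) \<in> borel_measurable M"
    by measurable
  have "(\<integral>\<^sup>+\<omega>. (\<Sum>k. ennreal ((1/2)^k) * of_nat (card (\<xi> \<omega> \<inter> dyadic_box t k))) \<partial>M)
      = ennreal t * (\<Sum>k. ennreal ((1/2)^k) * emeasure Pm (dyadic_shell k))"
    unfolding nn_integral_weighted_counts[OF intensity_dyadic_box(1,3)[OF assms]] intensity_dyadic_box(2)[OF assms]
    by (subst ennreal_suminf_cmult[symmetric]) (simp add: mult.assoc mult.left_commute)
  also have "\<dots> < \<infinity>" using weighted_dyadic_measure_finite[OF char] by (simp add: ennreal_mult_less_top)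
  finally show "(\<integral>\<^sup>+\<omega>. (\<Sum>k. ennreal ((1/2)^k) * of_nat (card (\<xi> \<omega> \<inter> dyadic_box t k))) \<partial>M) \<noteq> \<infinity>"
    by simp
qed

text \<open>Since \<open>zd\<close> is dominated by the sum of \<open>2^-k\<close> over the dyadic shells containing it,
  the sums of the \<open>zd\<close> are bounded by the almost surely finite weighted counts.\<close>
lemma AE_zd_summable:
  assumes "t \<ge> 0"
  shows "AE \<omega> in M. zd summable_on {p\<in>\<xi> \<omega>. fst p \<le> t}"
proof -
  have "AE \<omega> in M. \<forall>k. finite (\<xi> \<omega> \<inter> dyadic_box t k)"
    using AE_finite_points[OF intensity_dyadic_box(1,3)[OF assms]] by (simp add: AE_all_countable)
  then show ?thesis
    using AE_dyadic_counts_finite[OF assms] AE_space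
  proof eventually_elim
    case (elim \<omega>)
    define \<Phi> where "\<Phi> = (\<Sum>k. ennreal ((1/2)^k) * of_nat (card (\<xi> \<omega> \<inter> dyadic_box t k)))"
    let ?S = "{p\<in>\<xi> \<omega>. fst p \<le> t}"
    have nonneg: "0 \<le> zd p" if "p \<in> ?S" for p
      using points_in_space[OF elim(3), of p] that unfolding Zset_def by auto
    have "sum zd G \<le> enn2real \<Phi>" if G: "finite G" "G \<subseteq> ?S" for G
    proof -
      have "ennreal (zd p) \<le> (\<Sum>k. ennreal ((1/2)^k) * indicator (dyadic_box t k) p)" if "p \<in> G" for p
      proof -
        have p: "p \<in> \<xi> \<omega>" "fst p \<le> t" using that G by auto
        note pf = points_in_space[OF elim(3) p(1)]
        have "indicator (dyadic_box t k) p = (indicator (dyadic_shell k) (fst (snd p)) :: ennreal)" for k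
          using p(2) pf by (simp add: dyadic_box_def indicator_def mem_Times_iff)
        then show ?thesis using zd_le_dyadic_sum[of "fst (snd p)"] pf by simp
      qed
      then have "ennreal (sum zd G) \<le> \<Phi>"
        unfolding \<Phi>_def using G elim(1) nonneg by (intro sum_le_weighted_counts) auto
      then have "enn2real (ennreal (sum zd G)) \<le> enn2real \<Phi>"
        by (rule enn2real_mono) (use elim(2) in \<open>simp add: \<Phi>_def top.not_eq_extremum\<close>)
      moreover have "0 \<le> sum zd G" using G nonneg by (intro sum_nonneg) auto
      ultimately show ?thesis by simp
    qed
    then show ?case using nonneg by (intro nonneg_bdd_above_summable_on bdd_aboveI2) auto
  qed
qed

lemma prob_double_point_in_slices:
  fixes m :: nat
  assumes "t \<ge> 0" "B \<in> sets Pm" "emeasure Pm B < \<infinity>"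
  defines "E \<equiv> (\<Union>i\<le>m. {\<omega>\<in>space M. 2 \<le> card (\<xi> \<omega> \<inter> slice t m i B)})"
  shows "E \<in> sets M" "measure M E \<le> (t * measure Pm B)\<^sup>2 / real (Suc m)"
proof -
  interpret prob_space M by (rule prob_space_M)
  have lo: "0 \<le> real i * t / real (Suc m)" for i using assms(1) by simp
  have "real (Suc i) * t / real (Suc m) - real i * t / real (Suc m) = t / real (Suc m)" for i
    by (simp only: of_nat_Suc[of i]) (simp add: field_simps del: of_nat_Suc)
  moreover have "emeasure Pm B = ennreal (measure Pm B)" using assms(3) by (simp add: emeasure_eq_ennreal_measure)
  moreover have "ennreal (t / real (Suc m)) * ennreal (measure Pm B) = ennreal (t / real (Suc m) * measure Pm B)"
    using assms(1) by (intro ennreal_mult[symmetric]) auto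
  ultimately have emeasure_slice:
      "emeasure (intensity Pm) (slice t m i B) = ennreal (t / real (Suc m) * measure Pm B)" for i
    unfolding slice_def intensity_box(2)[OF sigma_finite_Pm assms(2) lo] by presburger
  have slice: "slice t m i B \<in> sets (intensity Pm)" "emeasure (intensity Pm) (slice t m i B) < \<infinity>" for i
    unfolding slice_def using intensity_box(1)[OF sigma_finite_Pm assms(2) lo] emeasure_slice
    by (auto simp: slice_def)
  have sets: "{\<omega>\<in>space M. 2 \<le> card (\<xi> \<omega> \<inter> slice t m i B)} \<in> sets M" for i
    using count_measurable[OF slice] by measurable
  then show "E \<in> sets M" unfolding E_def by auto
  have "measure M E \<le> (\<Sum>i\<le>m. measure M {\<omega>\<in>space M. 2 \<le> card (\<xi> \<omega> \<inter> slice t m i B)})"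
    unfolding E_def by (rule finite_measure_subadditive_finite) (use sets in auto)
  also have "\<dots> \<le> (\<Sum>i\<le>m. (t / real (Suc m) * measure Pm B)\<^sup>2)"
  proof (rule sum_mono)
    fix i
    have "measure (intensity Pm) (slice t m i B) = t / real (Suc m) * measure Pm B"
      using emeasure_slice[of i] assms(1) by (intro measure_eq_emeasure_eq_ennreal) auto
    then show "measure M {\<omega>\<in>space M. 2 \<le> card (\<xi> \<omega> \<inter> slice t m i B)} \<le> (t / real (Suc m) * measure Pm B)\<^sup>2"
      using prob_count_ge_2[OF slice(1)[of i] slice(2)[of i]] by simp
  qed
  also have "\<dots> = (t * measure Pm B)\<^sup>2 / real (Suc m)"
    by (simp add: power2_eq_square field_simps del: of_nat_Suc)
  finally show "measure M E \<le> (t * measure Pm B)\<^sup>2 / real (Suc m)" .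
qed

lemma AE_simple_in_some_slicing:
  assumes "t \<ge> 0" "B \<in> sets Pm" "emeasure Pm B < \<infinity>"
  shows "AE \<omega> in M. \<exists>m. \<forall>i\<le>m. card (\<xi> \<omega> \<inter> slice t m i B) < 2"
proof -
  interpret prob_space M by (rule prob_space_M)
  define E where "E m = (\<Union>i\<le>m. {\<omega>\<in>space M. 2 \<le> card (\<xi> \<omega> \<inter> slice t m i B)})" for m
  note E = prob_double_point_in_slices[OF assms, folded E_def]
  have "measure M (\<Inter>m. E m) \<le> (t * measure Pm B)\<^sup>2 / real (Suc m)" for m
    using finite_measure_mono[of "\<Inter>m. E m" "E m"] E[of m] by fastforce
  then have "measure M (\<Inter>m. E m) \<le> 0"
    using LIMSEQ_le_const[OF LIMSEQ_Suc[OF lim_const_over_n[of "(t * measure Pm B)\<^sup>2"]]] by auto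
  then have "(\<Inter>m. E m) \<in> null_sets M" using E by (auto simp: emeasure_eq_measure null_setsI measure_nonneg antisym)
  then have "AE \<omega> in M. \<omega> \<notin> (\<Inter>m. E m)" by (rule AE_not_in)
  then show ?thesis using AE_space by eventually_elim (auto simp: E_def not_le)
qed

text \<open>Two distinct points at the same time in \<open>[0,t] \<times> B\<close> lie in a common slice of every
  partition of \<open>[0,t]\<close> into \<open>m + 1\<close> intervals, which has probability \<open>O(1/m)\<close>.\<close>
lemma AE_no_simultaneous_points:
  assumes "t \<ge> 0" "B \<in> sets Pm" "emeasure Pm B < \<infinity>"
  shows "AE \<omega> in M. \<forall>p\<in>\<xi> \<omega>. \<forall>q\<in>\<xi> \<omega>. fst p \<le> t \<longrightarrow> fst p = fst q \<longrightarrow>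
           fst (snd p) \<in> B \<longrightarrow> fst (snd q) \<in> B \<longrightarrow> p = q"
proof -
  have W: "{0..t} \<times> (B \<times> space unif_seq) \<in> sets (intensity Pm)"
      "emeasure (intensity Pm) ({0..t} \<times> (B \<times> space unif_seq)) < \<infinity>"
    using intensity_box[OF sigma_finite_Pm assms(2) order_refl, of t] assms(3)
    by (auto simp: ennreal_mult_less_top)
  show ?thesis
    using AE_simple_in_some_slicing[OF assms] AE_finite_points[OF W] AE_space
  proof eventually_elim
    case (elim \<omega>)
    then obtain m where m: "\<And>i. i \<le> m \<Longrightarrow> card (\<xi> \<omega> \<inter> slice t m i B) < 2" by blast
    show ?case
    proof (intro ballI impI, rule ccontr)
      fix p q assume pq: "p \<in> \<xi> \<omega>" "q \<in> \<xi> \<omega>" "fst p \<le> t" "fst p = fst q"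
        "fst (snd p) \<in> B" "fst (snd q) \<in> B" "p \<noteq> q"
      obtain i where i: "i \<le> m" "real i * t / real (Suc m) \<le> fst p" "fst p \<le> real (Suc i) * t / real (Suc m)"
        using interval_slice_index[of "fst p" t m] points_in_space[OF elim(3) pq(1)] pq(3) by blast
      have pqi: "p \<in> slice t m i B" "q \<in> slice t m i B"
        using i pq points_in_space[OF elim(3)] by (auto simp: slice_def mem_Times_iff)
      have "t * real (Suc i) \<le> t * real (Suc m)" using i(1) assms(1) by (intro mult_left_mono) auto
      then have "real (Suc i) * t / real (Suc m) \<le> t" by (simp add: pos_divide_le_eq mult.commute del: of_nat_Suc)
      moreover have "0 \<le> real i * t / real (Suc m)" using assms(1) by simp
      ultimately have "slice t m i B \<subseteq> {0..t} \<times> (B \<times> space unif_seq)" unfolding slice_def by auto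
      then have "finite (\<xi> \<omega> \<inter> slice t m i B)" by (intro finite_subset[OF _ elim(2)]) blast
      then have "card {p, q} \<le> card (\<xi> \<omega> \<inter> slice t m i B)" using pqi pq by (intro card_mono) auto
      then show False using m[OF i(1)] pq(7) by simp
    qed
  qed
qed

lemma AE_no_simultaneous_jumps:
  assumes "t \<ge> 0"
  shows "AE \<omega> in M. \<forall>p\<in>\<xi> \<omega>. \<forall>q\<in>\<xi> \<omega>. fst p \<le> t \<longrightarrow> fst p = fst q \<longrightarrow> zd p > 0 \<longrightarrow> zd q > 0 \<longrightarrow> p = q"
proof -
  define B where "B k = {z\<in>Zset. 1 / real (Suc k) \<le> fst z}" for k
  have "AE \<omega> in M. \<forall>k. \<forall>p\<in>\<xi> \<omega>. \<forall>q\<in>\<xi> \<omega>. fst p \<le> t \<longrightarrow> fst p = fst q \<longrightarrow>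
           fst (snd p) \<in> B k \<longrightarrow> fst (snd q) \<in> B k \<longrightarrow> p = q"
    unfolding AE_all_countable B_def
    using AE_no_simultaneous_points[OF assms zd_ge_sets[OF char] emeasure_zd_ge_finite[OF char]] by simp
  then show ?thesis
    using AE_space
  proof eventually_elim
    case (elim \<omega>)
    show ?case
    proof (intro ballI impI)
      fix p q assume pq: "p \<in> \<xi> \<omega>" "q \<in> \<xi> \<omega>" "fst p \<le> t" "fst p = fst q" "zd p > 0" "zd q > 0"
      obtain k where "inverse (real (Suc k)) < min (zd p) (zd q)"
        using reals_Archimedean[of "min (zd p) (zd q)"] pq(5,6) by auto
      then have "fst (snd p) \<in> B k" "fst (snd q) \<in> B k"
        using points_in_space[OF elim(2) pq(1)] points_in_space[OF elim(2) pq(2)]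
        by (auto simp: B_def inverse_eq_divide)
      then show "p = q" using elim(1) pq by blast
    qed
  qed
qed

end

theorem lemma6p1:
  fixes \<gamma> :: "real \<times> real" and Pm :: "(real \<times> real) measure" and N0 :: real
    and M :: "'w measure" and \<xi> :: "'w \<Rightarrow> point set" and N :: "'w \<Rightarrow> real \<Rightarrow> real"
  assumes "characteristic \<gamma> Pm"
    and "N0 > 0"
    and "poisson_point_process M (intensity Pm) \<xi>"
    and "\<forall>t\<ge>0. (\<lambda>\<omega>. N \<omega> t) \<in> borel_measurable M"
    and "AE \<omega> in M. solves_sde \<gamma> N0 (\<xi> \<omega>) (N \<omega>)"
    and "t \<ge> 0"
  shows "AE \<omega> in M. (zbar (N \<omega>)) summable_on {p\<in>\<xi> \<omega>. fst p \<le> t}"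
proof -
  \<comment> \<open>The argument is pathwise.\<close>
  interpret poisson_intensity \<gamma> Pm M \<xi>
    using assms(1,3) by unfold_locales
  have \<gamma>: "fst \<gamma> \<ge> 0" "snd \<gamma> \<ge> 0" using assms(1) unfolding characteristic_def by auto
  show ?thesis
    using AE_zd_summable[OF assms(6)] AE_no_simultaneous_jumps[OF assms(6)] assms(5) AE_space
  proof eventually_elim
    case (elim \<omega>)
    have "sde_path (fst \<gamma>) (snd \<gamma>) N0 (\<xi> \<omega>) (N \<omega>) t"
      by (rule sde_pathI) (use elim \<gamma> assms(2,6) points_in_space in auto)
    then show ?case by (rule sde_path.zbar_summable)
  qed
qed

end
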